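(* Let $\alpha,\beta,\gamma$ be partitions with $\alpha_1\le2$ and let $\Gamma$ be an LR-tableau of type $(\alpha,\beta,\gamma)$ such that every row of $\Gamma$ contains at most one (non-empty) box. Then in the poset $(\mathcal D_\Gamma,\le_{\rm arc})$ all saturated chains have the same length.
   Context: For a partition $\lambda$, $\lambda'$ is its conjugate; here the diagram of $\lambda$ is drawn with $\lambda'_i$ boxes in row $i$, so for $\gamma\subseteq\beta$ the $i$-th row of the skew diagram $\beta\setminus\gamma$ consists of the boxes in columns $\gamma'_i+1,\dots,\beta'_i$. With $\alpha_1\le 2$, $\alpha'=(\alpha'_1,\alpha'_2)$. An LR-tableau of type $(\alpha,\beta,\gamma)$ is a filling of $\beta\setminus\gamma$ with $\alpha'_1$ entries $1$ and $\alpha'_2$ entries $2$, weakly increasing along rows, strictly increasing down columns, and such that for each $c\ge0$ the number of entries $1$ in columns to the right of column $c$ is at least the number of entries $2$ there. Place the positive integers on a line in decreasing order from left to right. An arc is a pair $(m,n)$, $m>n$ positive integers (source $m$, target $n$); a pole at $n$ is regarded as an arc $(\infty,n)$. An arc diagram of type $(\alpha,\beta,\gamma)$ is a finite multiset of $\alpha'_2$ arcs and $\alpha'_1-\alpha'_2$ poles with, for each $i$, exactly $\beta'_i-\gamma'_i$ members having source or target $i$. It has LR type $\Gamma$ if for each $i$ the number of arcs with source $i$ equals the number of entries $2$ in row $i$ of $\Gamma$; $\mathcal D_\Gamma$ is the set of arc diagrams of type $(\alpha,\beta,\gamma)$ of LR type $\Gamma$. Members $(m,n),(k,r)$ cross iff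 $r<n<k<m$ or $n<r<m<k$. Moves: for $a>b>c>d$, (A) replaces arcs $(a,c),(b,d)$ by $(a,d),(b,c)$; for $a>b>c$, (B) replaces arc $(a,c)$ and pole $(\infty,b)$ by arc $(a,b)$ and pole $(\infty,c)$; (C) replaces arcs $(a,c),(b,d)$ by $(a,b),(c,d)$; (D) replaces arc $(a,c)$ and pole $(\infty,b)$ by arc $(b,c)$ and pole $(\infty,a)$. $\Delta\le_{\rm arc}\Delta'$ iff $\Delta$ is obtained from $\Delta'$ by a finite (possibly empty) sequence of moves; $\mathcal D_\Gamma$ carries the restricted order. A chain is saturated if it has no refinement, i.e. is not properly contained in another chain of the poset. *)

theory Defs
  imports Main "HOL-Library.Multiset" "HOL-Library.Extended_Nat"
begin

definition is_partition :: "nat list \<Rightarrow> bool" where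
  "is_partition lam \<longleftrightarrow> sorted (rev lam) \<and> 0 \<notin> set lam"

definition conjugate :: "nat list \<Rightarrow> nat \<Rightarrow> nat" where
  "conjugate lam i = length (filter (\<lambda>x. i \<le> x) lam)"

text \<open>Boxes (row i, column j) of the skew diagram beta \ gamma; row i has
  conjugate beta i boxes in beta, so row i of beta \ gamma is columns conjugate gamma i + 1 .. conjugate beta i.\<close>
definition skew_boxes :: "nat list \<Rightarrow> nat list \<Rightarrow> (nat \<times> nat) set" where
  "skew_boxes beta gamma = {(i, j). 1 \<le> i \<and> conjugate gamma i < j \<and> j \<le> conjugate beta i}"

text \<open>LR-tableau of type (alpha, beta, gamma) with alpha_1 \<le> 2; T i j is the entry in row i, column j.\<close>
definition LR_tableau :: "nat list \<Rightarrow> nat list \<Rightarrow> nat list \<Rightarrow> (nat \<Rightarrow> nat \<Rightarrow> nat) \<Rightarrow> bool" where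
  "LR_tableau alpha beta gamma T \<longleftrightarrow>
     (\<forall>i\<ge>1. conjugate gamma i \<le> conjugate beta i) \<and>
     (\<forall>(i, j)\<in>skew_boxes beta gamma. T i j \<in> {1, 2}) \<and>
     card {(i, j)\<in>skew_boxes beta gamma. T i j = 1} = conjugate alpha 1 \<and>
     card {(i, j)\<in>skew_boxes beta gamma. T i j = 2} = conjugate alpha 2 \<and>
     (\<forall>i j j'. (i, j) \<in> skew_boxes beta gamma \<longrightarrow> (i, j') \<in> skew_boxes beta gamma \<longrightarrow>
        j < j' \<longrightarrow> T i j \<le> T i j') \<and>
     (\<forall>i i' j. (i, j) \<in> skew_boxes beta gamma \<longrightarrow> (i', j) \<in> skew_boxes beta gamma \<longrightarrow>
        i < i' \<longrightarrow> T i j < T i' j) \<and>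
     (\<forall>c::nat. card {(i, j)\<in>skew_boxes beta gamma. c < j \<and> T i j = 2}
              \<le> card {(i, j)\<in>skew_boxes beta gamma. c < j \<and> T i j = 1})"

text \<open>Members of arc diagrams: (source, target); an arc (m, n) is (enat m, n), a pole at n is (\<infinity>, n).\<close>
type_synonym member = "enat \<times> nat"

definition valid_member :: "member \<Rightarrow> bool" where
  "valid_member x \<longleftrightarrow> 1 \<le> snd x \<and> enat (snd x) < fst x"

definition is_arc :: "member \<Rightarrow> bool" where
  "is_arc x \<longleftrightarrow> fst x \<noteq> \<infinity>"

definition is_pole :: "member \<Rightarrow> bool" where
  "is_pole x \<longleftrightarrow> fst x = \<infinity>"

definition arc_diagram :: "nat list \<Rightarrow> nat list \<Rightarrow> nat list \<Rightarrow> member multiset \<Rightarrow> bool" where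
  "arc_diagram alpha beta gamma D \<longleftrightarrow>
     (\<forall>x\<in>#D. valid_member x) \<and>
     size (filter_mset is_arc D) = conjugate alpha 2 \<and>
     size (filter_mset is_pole D) = conjugate alpha 1 - conjugate alpha 2 \<and>
     (\<forall>i\<ge>1. size (filter_mset (\<lambda>x. fst x = enat i \<or> snd x = i) D) = conjugate beta i - conjugate gamma i)"

definition has_LR_type :: "nat list \<Rightarrow> nat list \<Rightarrow> (nat \<Rightarrow> nat \<Rightarrow> nat) \<Rightarrow> member multiset \<Rightarrow> bool" where
  "has_LR_type beta gamma T D \<longleftrightarrow>
     (\<forall>i\<ge>1. size (filter_mset (\<lambda>x. fst x = enat i) D)
             = card {j. (i, j) \<in> skew_boxes beta gamma \<and> T i j = 2})"

definition D_Gamma :: "nat list \<Rightarrow> nat list \<Rightarrow> nat list \<Rightarrow> (nat \<Rightarrow> nat \<Rightarrow> nat) \<Rightarrow> member multiset set" where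
  "D_Gamma alpha beta gamma T = {D. arc_diagram alpha beta gamma D \<and> has_LR_type beta gamma T D}"

text \<open>arc_move D' D: D is obtained from D' by a single move (A), (B), (C) or (D).\<close>
definition arc_move :: "member multiset \<Rightarrow> member multiset \<Rightarrow> bool" where
  "arc_move D' D \<longleftrightarrow>
     (\<exists>a b c d::nat. a > b \<and> b > c \<and> c > d \<and>
        {#(enat a, c), (enat b, d)#} \<subseteq># D' \<and>
        D = D' - {#(enat a, c), (enat b, d)#} + {#(enat a, d), (enat b, c)#}) \<or>
     (\<exists>a b c::nat. a > b \<and> b > c \<and>
        {#(enat a, c), (\<infinity>, b)#} \<subseteq># D' \<and>
        D = D' - {#(enat a, c), (\<infinity>, b)#} + {#(enat a, b), (\<infinity>, c)#}) \<or>
     (\<exists>a b c d::nat. a > b \<and> b > c \<and> c > d \<and>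
        {#(enat a, c), (enat b, d)#} \<subseteq># D' \<and>
        D = D' - {#(enat a, c), (enat b, d)#} + {#(enat a, b), (enat c, d)#}) \<or>
     (\<exists>a b c::nat. a > b \<and> b > c \<and>
        {#(enat a, c), (\<infinity>, b)#} \<subseteq># D' \<and>
        D = D' - {#(enat a, c), (\<infinity>, b)#} + {#(enat b, c), (\<infinity>, a)#})"

definition le_arc :: "member multiset \<Rightarrow> member multiset \<Rightarrow> bool" where
  "le_arc D D' \<longleftrightarrow> arc_move\<^sup>*\<^sup>* D' D"

definition is_chain_in :: "'a set \<Rightarrow> ('a \<Rightarrow> 'a \<Rightarrow> bool) \<Rightarrow> 'a set \<Rightarrow> bool" where
  "is_chain_in P le C \<longleftrightarrow> C \<subseteq> P \<and> (\<forall>x\<in>C. \<forall>y\<in>C. le x y \<or> le y x)"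

definition saturated_chain :: "'a set \<Rightarrow> ('a \<Rightarrow> 'a \<Rightarrow> bool) \<Rightarrow> 'a set \<Rightarrow> bool" where
  "saturated_chain P le C \<longleftrightarrow> is_chain_in P le C \<and> \<not> (\<exists>C'. is_chain_in P le C' \<and> C \<subset> C')"

end

theory Submission
  imports Defs
begin

text \<open>Read a member \<open>(s, t)\<close> as the interval from its target \<open>t\<close> to its source \<open>s\<close>.
  Moves (A) and (B) turn two crossing members into two nested ones, while moves (C) and (D) lower
  the sum of the finite sources; this sum is the same for all diagrams of \<open>D_Gamma\<close>, whose multiset
  of sources is fixed by the LR type and the number of poles. So \<open>le_arc\<close> on \<open>D_Gamma\<close> is generated
  by uncrossings, which stay in \<open>D_Gamma\<close>.

  If every row of the skew diagram has at most one box, each row is touched by at most one member.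
  Then an uncrossing raises the number of nested pairs by at least one, and by more only when a third
  member lies between the two, in which case the uncrossing factors through two smaller ones. Thus the
  number of nested pairs is a rank function whose cover relations are exactly the steps of length
  one. The extremal diagrams (no uncrossing leads out of, resp. into them) are unique: comparing two
  of them arc by arc in order of increasing source, a first disagreement would produce a forbidden
  crossing or nesting. Hence \<open>D_Gamma\<close> has a least and a greatest element, every saturated chain
  passes through all ranks between them, and all saturated chains have the same length.\<close>

section \<open>Ranked preorders\<close>

locale ranked_preorder =
  fixes P :: "'a set" and le :: "'a \<Rightarrow> 'a \<Rightarrow> bool" and rank :: "'a \<Rightarrow> nat"
  assumes le_refl: "x \<in> P \<Longrightarrow> le x x"
    and le_trans: "x \<in> P \<Longrightarrow> y \<in> P \<Longrightarrow> z \<in> P \<Longrightarrow> le x y \<Longrightarrow> le y z \<Longrightarrow> le x z"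
    and rank_less: "x \<in> P \<Longrightarrow> y \<in> P \<Longrightarrow> le x y \<Longrightarrow> x \<noteq> y \<Longrightarrow> rank x < rank y"
begin

lemma ex_minimal_below:
  assumes "x \<in> P"
  shows "\<exists>m\<in>P. le m x \<and> (\<forall>y\<in>P. le y m \<longrightarrow> y = m)"
proof -
  obtain m where m: "m \<in> P" "le m x" and least: "\<And>y. y \<in> P \<Longrightarrow> le y x \<Longrightarrow> rank m \<le> rank y"
    using ex_has_least_nat[of "\<lambda>y. y \<in> P \<and> le y x" x rank] assms le_refl by blast
  have "y = m" if "y \<in> P" "le y m" for y
  proof (rule ccontr)
    assume "y \<noteq> m"
    then have "rank y < rank m"
      using rank_less that m by blast
    moreover have "rank m \<le> rank y"
      using least le_trans[of y m x] that m assms by blast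
    ultimately show False by simp
  qed
  with m show ?thesis by blast
qed

lemma ex_maximal_above:
  assumes "x \<in> P" and bounded: "\<forall>y\<in>P. rank y \<le> B"
  shows "\<exists>m\<in>P. le x m \<and> (\<forall>y\<in>P. le m y \<longrightarrow> y = m)"
proof -
  obtain m where m: "m \<in> P" "le x m" and greatest: "\<And>y. y \<in> P \<Longrightarrow> le x y \<Longrightarrow> rank y \<le> rank m"
    using Lattices_Big.ex_has_greatest_nat[of "\<lambda>y. y \<in> P \<and> le x y" x rank "Suc B"]
      assms le_refl by (auto simp: less_Suc_eq_le)
  have "y = m" if "y \<in> P" "le m y" for y
  proof (rule ccontr)
    assume "y \<noteq> m"
    then have "rank m < rank y"
      using rank_less[of m y] that m by auto
    moreover have "rank y \<le> rank m"
      using greatest le_trans[of x m y] that m assms by blast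
    ultimately show False by simp
  qed
  with m show ?thesis by blast
qed

lemma saturated_chain_memI:
  assumes "saturated_chain P le C" "z \<in> P" "\<forall>w\<in>C. le w z \<or> le z w"
  shows "z \<in> C"
proof (rule ccontr)
  assume "z \<notin> C"
  then have "C \<subset> insert z C" by blast
  moreover have "is_chain_in P le (insert z C)"
    using assms le_refl unfolding saturated_chain_def is_chain_in_def by blast
  ultimately show False
    using assms(1) unfolding saturated_chain_def by blast
qed

lemma chain_le_if_rank_less:
  assumes "is_chain_in P le C" "x \<in> C" "y \<in> C" "rank x < rank y"
  shows "le x y"
proof -
  have "x \<in> P" "y \<in> P" "x \<noteq> y"
    using assms unfolding is_chain_in_def by auto
  then show ?thesis
    using assms rank_less[of y x] unfolding is_chain_in_def by fastforce
qed

lemma saturated_chain_ex_rank_between: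
  assumes sat: "saturated_chain P le C" and "x \<in> C" "y \<in> C" "rank x + 2 \<le> rank y"
    and interpolate: "\<exists>z\<in>P. le x z \<and> le z y \<and> rank x < rank z \<and> rank z < rank y"
  shows "\<exists>w\<in>C. rank x < rank w \<and> rank w < rank y"
proof (rule ccontr)
  assume gap: "\<not> ?thesis"
  have chain: "is_chain_in P le C"
    using sat unfolding saturated_chain_def by blast
  then have CP: "C \<subseteq> P"
    unfolding is_chain_in_def by blast
  obtain z where z: "z \<in> P" "le x z" "le z y" "rank x < rank z" "rank z < rank y"
    using interpolate by blast
  have "le w z \<or> le z w" if w: "w \<in> C" for w
  proof (cases "rank w \<le> rank x")
    case True
    then have "w = x \<or> le w x"
      using chain w \<open>x \<in> C\<close> rank_less[of x w] CP True unfolding is_chain_in_def by fastforce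
    then show ?thesis
      using le_trans[of w x z] w CP z \<open>x \<in> C\<close> by blast
  next
    case False
    then have "rank y \<le> rank w"
      using gap w by auto
    then have "w = y \<or> le y w"
      using chain w \<open>y \<in> C\<close> rank_less[of w y] CP unfolding is_chain_in_def by fastforce
    then show ?thesis
      using le_trans[of z y w] w CP z \<open>y \<in> C\<close> by blast
  qed
  then have "z \<in> C"
    using saturated_chain_memI[OF sat z(1)] by blast
  with gap z show False by blast
qed

lemma card_saturated_chain:
  assumes interpolate: "\<And>x y. x \<in> P \<Longrightarrow> y \<in> P \<Longrightarrow> le x y \<Longrightarrow> rank x + 2 \<le> rank y \<Longrightarrow>
      \<exists>z\<in>P. le x z \<and> le z y \<and> rank x < rank z \<and> rank z < rank y"
    and lo: "lo \<in> P" "\<forall>x\<in>P. le lo x"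
    and hi: "hi \<in> P" "\<forall>x\<in>P. le x hi"
    and sat: "saturated_chain P le C"
  shows "card C = rank hi + 1 - rank lo"
proof -
  have chain: "is_chain_in P le C" and CP: "C \<subseteq> P"
    using sat unfolding saturated_chain_def is_chain_in_def by blast+
  have "lo \<in> C" "hi \<in> C"
    using saturated_chain_memI[OF sat] lo hi CP by blast+
  have inj: "inj_on rank C"
  proof (rule inj_onI)
    fix x y assume "x \<in> C" "y \<in> C" "rank x = rank y"
    then show "x = y"
      using chain rank_less[of x y] rank_less[of y x] CP unfolding is_chain_in_def by auto
  qed
  have range: "rank ` C \<subseteq> {rank lo..rank hi}"
  proof
    fix r assume "r \<in> rank ` C"
    then obtain w where "w \<in> C" "r = rank w" by blast
    then have "w \<in> P" using CP by blast
    then have "lo = w \<or> rank lo < rank w" "w = hi \<or> rank w < rank hi"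
      using lo hi rank_less by blast+
    then show "r \<in> {rank lo..rank hi}"
      using \<open>r = rank w\<close> by auto
  qed
  have "k \<in> rank ` C" if k: "k \<in> {rank lo..rank hi}" for k
  proof (rule ccontr)
    assume missing: "k \<notin> rank ` C"
    have "rank lo \<noteq> k" "rank hi \<noteq> k"
      using missing \<open>lo \<in> C\<close> \<open>hi \<in> C\<close> by blast+
    with k have "rank lo < k" "k < rank hi"
      by auto
    with \<open>lo \<in> C\<close> \<open>hi \<in> C\<close> obtain x y where x: "x \<in> C" "rank x < k" "\<And>w. w \<in> C \<Longrightarrow> rank w < k \<Longrightarrow> rank w \<le> rank x"
      and y: "y \<in> C" "k < rank y" "\<And>w. w \<in> C \<Longrightarrow> k < rank w \<Longrightarrow> rank y \<le> rank w"
      using Lattices_Big.ex_has_greatest_nat[of "\<lambda>w. w \<in> C \<and> rank w < k" lo rank k]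
        ex_has_least_nat[of "\<lambda>w. w \<in> C \<and> k < rank w" hi rank] by blast
    have "le x y"
      using chain_le_if_rank_less[OF chain x(1) y(1)] x y by simp
    moreover have "rank x + 2 \<le> rank y"
      using x(2) y(2) by simp
    ultimately obtain w where w: "w \<in> C" "rank x < rank w" "rank w < rank y"
      using saturated_chain_ex_rank_between[OF sat x(1) y(1)] interpolate x(1) y(1) CP by blast
    moreover have "rank w \<noteq> k"
      using missing w(1) by blast
    ultimately show False
      using x(3)[OF w(1)] y(3)[OF w(1)] by linarith
  qed
  then have "rank ` C = {rank lo..rank hi}"
    using range by blast
  then show ?thesis
    using card_image[OF inj] by simp
qed

end

lemma saturated_chain_converse:
  "saturated_chain P (\<lambda>x y. le y x) C \<longleftrightarrow> saturated_chain P le C"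
  unfolding saturated_chain_def is_chain_in_def by blast

section \<open>Multisets of members\<close>

lemma multi_member_split2:
  assumes "x \<in># D" "y \<in># D" "x \<noteq> y"
  obtains R where "D = add_mset x (add_mset y R)"
proof -
  obtain R1 where R1: "D = add_mset x R1"
    using multi_member_split[OF assms(1)] by blast
  have "y \<in># R1"
    using assms(2,3) unfolding R1 by simp
  then obtain R where "R1 = add_mset y R"
    using multi_member_split[of y R1] by blast
  then show thesis
    using R1 by (intro that) simp
qed

lemma pair_replacement_split:
  assumes "{#x, y#} \<subseteq># D" "D' = D - {#x, y#} + {#x', y'#}"
  obtains R where "D = add_mset x (add_mset y R)" "D' = add_mset x' (add_mset y' R)"
proof -
  have "{#x, y#} + (D - {#x, y#}) = D"
    by (rule subset_mset.add_diff_inverse[OF assms(1)])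
  with assms(2) show thesis
    using that[of "D - {#x, y#}"] by simp
qed

lemma sum_mset_less_imp_ex_less:
  fixes f g :: "'a \<Rightarrow> nat"
  assumes "(\<Sum>z\<in>#R. f z) < (\<Sum>z\<in>#R. g z)"
  shows "\<exists>z\<in>#R. f z < g z"
  using sum_mset_mono[of R g f] assms by (meson leD not_le_imp_less)

lemma count_image_mset_eq_size_filter:
  "count (image_mset f D) v = size (filter_mset (\<lambda>x. f x = v) D)"
  by (induction D) auto

definition touches :: "member \<Rightarrow> nat \<Rightarrow> bool" where
  "touches x i \<longleftrightarrow> fst x = enat i \<or> snd x = i"

definition row_thin :: "member multiset \<Rightarrow> bool" where
  "row_thin D \<longleftrightarrow> (\<forall>i\<ge>1. size (filter_mset (\<lambda>x. touches x i) D) \<le> 1)"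

lemma row_thin_two_touching:
  assumes "row_thin D" "{#x, y#} \<subseteq># D" "1 \<le> i" "touches x i" "touches y i"
  shows False
proof -
  have "size (filter_mset (\<lambda>x. touches x i) {#x, y#}) \<le> size (filter_mset (\<lambda>x. touches x i) D)"
    using assms(2) by (intro size_mset_mono multiset_filter_mono)
  moreover have "size (filter_mset (\<lambda>x. touches x i) D) \<le> 1"
    using assms(1,3) unfolding row_thin_def by blast
  ultimately show False
    using assms(4,5) by simp
qed

lemma row_thin_touching_eq:
  assumes "row_thin D" "x \<in># D" "y \<in># D" "1 \<le> i" "touches x i" "touches y i"
  shows "x = y"
proof (rule ccontr)
  assume "x \<noteq> y"
  then obtain R where "D = add_mset x (add_mset y R)"
    by (rule multi_member_split2[OF assms(2,3)])
  then have "{#x, y#} \<subseteq># D"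
    by simp
  then show False
    by (rule row_thin_two_touching[OF assms(1) _ assms(4-6)])
qed

lemma row_thin_count_le_1:
  assumes "row_thin D" "valid_member x"
  shows "count D x \<le> 1"
proof (rule ccontr)
  assume "\<not> count D x \<le> 1"
  then have "count {#x, x#} y \<le> count D y" for y
    by (cases "y = x") auto
  then have "{#x, x#} \<subseteq># D"
    by (rule mset_subset_eqI)
  moreover have "1 \<le> snd x"
    using assms(2) by (simp add: valid_member_def)
  moreover have "touches x (snd x)"
    by (simp add: touches_def)
  ultimately show False
    using row_thin_two_touching[OF assms(1)] by blast
qed

section \<open>Uncrossing\<close>

text \<open>Moves (A) and (B) in one form: the crossing members \<open>(s\<^sub>1, t\<^sub>1)\<close> and \<open>(s\<^sub>2, t\<^sub>2)\<close>,
  \<open>s\<^sub>1 > s\<^sub>2 > t\<^sub>1 > t\<^sub>2\<close>, exchange their targets and become nested; (B) is the case \<open>s\<^sub>1 = \<infinity>\<close>.\<close>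
definition uncross :: "member multiset \<Rightarrow> member multiset \<Rightarrow> bool" where
  "uncross D D' \<longleftrightarrow> (\<exists>s1 s2 t1 t2 R. s2 < s1 \<and> enat t1 < s2 \<and> t2 < t1 \<and>
     D = add_mset (s1, t1) (add_mset (s2, t2) R) \<and> D' = add_mset (s1, t2) (add_mset (s2, t1) R))"

lemma uncrossI:
  assumes "s2 < s1" "enat t1 < s2" "t2 < t1"
  shows "uncross (add_mset (s1, t1) (add_mset (s2, t2) R)) (add_mset (s1, t2) (add_mset (s2, t1) R))"
  using assms unfolding uncross_def by blast

lemma uncross_of_members:
  assumes "(s1, t1) \<in># D" "(s2, t2) \<in># D" "s2 < s1" "enat t1 < s2" "t2 < t1"
  shows "\<exists>D'. uncross D D'"
proof -
  have "(s1, t1) \<noteq> (s2, t2)"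
    using assms(3) by auto
  then obtain R where "D = add_mset (s1, t1) (add_mset (s2, t2) R)"
    by (rule multi_member_split2[OF assms(1,2)])
  then show ?thesis
    using uncrossI[OF assms(3-5)] by blast
qed

lemma uncross_into_members:
  assumes "(s1, t2) \<in># D" "(s2, t1) \<in># D" "s2 < s1" "enat t1 < s2" "t2 < t1"
  shows "\<exists>D'. uncross D' D"
proof -
  have "(s1, t2) \<noteq> (s2, t1)"
    using assms(3) by auto
  then obtain R where "D = add_mset (s1, t2) (add_mset (s2, t1) R)"
    by (rule multi_member_split2[OF assms(1,2)])
  then show ?thesis
    using uncrossI[OF assms(3-5)] by blast
qed

lemma uncross_imp_arc_move:
  assumes "uncross D D'"
  shows "arc_move D D'"
proof -
  obtain s1 s2 t1 t2 R where o: "s2 < s1" "enat t1 < s2" "t2 < t1"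
    and D: "D = add_mset (s1, t1) (add_mset (s2, t2) R)"
    and D': "D' = add_mset (s1, t2) (add_mset (s2, t1) R)"
    using assms unfolding uncross_def by blast
  obtain b where b: "s2 = enat b"
    using o(1) by (cases s2) auto
  show ?thesis
  proof (cases s1)
    case (enat a)
    then have ord: "b < a" "t1 < b" "t2 < t1"
      using o b by simp_all
    show ?thesis
      unfolding arc_move_def D D' b enat
      by (rule disjI1, rule exI[of _ a], rule exI[of _ b], rule exI[of _ t1], rule exI[of _ t2])
        (simp add: ord)
  next
    case infinity
    have ord: "t1 < b" "t2 < t1"
      using o b by simp_all
    show ?thesis
      unfolding arc_move_def D D' b infinity
      by (rule disjI2, rule disjI1, rule exI[of _ b], rule exI[of _ t1], rule exI[of _ t2])
        (simp add: ord add_mset_commute)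
  qed
qed

definition source_sum :: "member multiset \<Rightarrow> nat" where
  "source_sum D = (\<Sum>x\<in>#D. case fst x of enat s \<Rightarrow> s | \<infinity> \<Rightarrow> 0)"

lemma source_sum_add_mset [simp]:
  "source_sum (add_mset x D) = (case fst x of enat s \<Rightarrow> s | \<infinity> \<Rightarrow> 0) + source_sum D"
  by (simp add: source_sum_def)

lemma source_sum_uncross:
  assumes "uncross D D'"
  shows "source_sum D' = source_sum D"
  using assms unfolding uncross_def by auto

text \<open>Moves (C) and (D) lower a source and so the sum of the finite sources.\<close>
lemma arc_move_uncross_or_source_sum_less:
  assumes "arc_move D D'"
  shows "uncross D D' \<or> source_sum D' < source_sum D"
  using assms unfolding arc_move_def
proof (elim disjE exE conjE)
  fix a b c d :: nat
  assume o: "b < a" "c < b" "d < c" and sub: "{#(enat a, c), (enat b, d)#} \<subseteq># D"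
    and D': "D' = D - {#(enat a, c), (enat b, d)#} + {#(enat a, d), (enat b, c)#}"
  obtain R where "D = add_mset (enat a, c) (add_mset (enat b, d) R)"
    "D' = add_mset (enat a, d) (add_mset (enat b, c) R)"
    by (rule pair_replacement_split[OF sub D'])
  then show ?thesis
    using uncrossI[of "enat b" "enat a" c d R] o by simp
next
  fix a b c :: nat
  assume o: "b < a" "c < b" and sub: "{#(enat a, c), (\<infinity>, b)#} \<subseteq># D"
    and D': "D' = D - {#(enat a, c), (\<infinity>, b)#} + {#(enat a, b), (\<infinity>, c)#}"
  obtain R where "D = add_mset (enat a, c) (add_mset (\<infinity>, b) R)"
    "D' = add_mset (enat a, b) (add_mset (\<infinity>, c) R)"
    by (rule pair_replacement_split[OF sub D'])
  then show ?thesis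
    using uncrossI[of "enat a" \<infinity> b c R] o by (simp add: add_mset_commute)
next
  fix a b c d :: nat
  assume o: "b < a" "c < b" "d < c" and sub: "{#(enat a, c), (enat b, d)#} \<subseteq># D"
    and D': "D' = D - {#(enat a, c), (enat b, d)#} + {#(enat a, b), (enat c, d)#}"
  obtain R where "D = add_mset (enat a, c) (add_mset (enat b, d) R)"
    "D' = add_mset (enat a, b) (add_mset (enat c, d) R)"
    by (rule pair_replacement_split[OF sub D'])
  then show ?thesis
    using o by simp
next
  fix a b c :: nat
  assume o: "b < a" "c < b" and sub: "{#(enat a, c), (\<infinity>, b)#} \<subseteq># D"
    and D': "D' = D - {#(enat a, c), (\<infinity>, b)#} + {#(enat b, c), (\<infinity>, a)#}"
  obtain R where "D = add_mset (enat a, c) (add_mset (\<infinity>, b) R)"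
    "D' = add_mset (enat b, c) (add_mset (\<infinity>, a) R)"
    by (rule pair_replacement_split[OF sub D'])
  then show ?thesis
    using o by simp
qed

lemma source_sum_arc_moves:
  assumes "arc_move\<^sup>*\<^sup>* D D'"
  shows "source_sum D' \<le> source_sum D"
  using assms
proof (induction rule: rtranclp_induct)
  case (step D' D'')
  then show ?case
    using arc_move_uncross_or_source_sum_less[of D' D''] source_sum_uncross[of D' D''] by force
qed simp

section \<open>Counting nested pairs\<close>

definition nests :: "member \<Rightarrow> member \<Rightarrow> bool" where
  "nests x y \<longleftrightarrow> fst y < fst x \<and> snd x < snd y"

definition nestings :: "member multiset \<Rightarrow> nat" where
  "nestings D = (\<Sum>x\<in>#D. \<Sum>y\<in>#D. of_bool (nests x y))"

definition nest_weight :: "member \<Rightarrow> member \<Rightarrow> nat" where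
  "nest_weight x y = of_bool (nests x y) + of_bool (nests y x)"

lemma nestings_add_mset:
  "nestings (add_mset x D) = nestings D + (\<Sum>y\<in>#D. nest_weight x y)"
  by (simp add: nestings_def nest_weight_def nests_def sum_mset.distrib)

lemma nestings_le_square: "nestings D \<le> size D * size D"
proof -
  have "(\<Sum>y\<in>#D. of_bool (nests x y)) \<le> size D" for x
    using sum_mset_mono[of D "\<lambda>y. of_bool (nests x y)" "\<lambda>_. 1::nat"] by simp
  then show ?thesis
    using sum_mset_mono[of D "\<lambda>x. \<Sum>y\<in>#D. of_bool (nests x y)" "\<lambda>_. size D"]
    unfolding nestings_def by simp
qed

lemma nestings_uncross_split:
  assumes "s2 < s1" "enat t1 < s2" "t2 < t1"
  shows "nestings (add_mset (s1, t1) (add_mset (s2, t2) R))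
      = nestings R + (\<Sum>z\<in>#R. nest_weight (s1, t1) z + nest_weight (s2, t2) z)"
    and "nestings (add_mset (s1, t2) (add_mset (s2, t1) R))
      = nestings R + 1 + (\<Sum>z\<in>#R. nest_weight (s1, t2) z + nest_weight (s2, t1) z)"
proof -
  have "nest_weight (s1, t1) (s2, t2) = 0" "nest_weight (s1, t2) (s2, t1) = 1"
    using assms by (auto simp: nest_weight_def nests_def)
  then show "nestings (add_mset (s1, t1) (add_mset (s2, t2) R))
      = nestings R + (\<Sum>z\<in>#R. nest_weight (s1, t1) z + nest_weight (s2, t2) z)"
    and "nestings (add_mset (s1, t2) (add_mset (s2, t1) R))
      = nestings R + 1 + (\<Sum>z\<in>#R. nest_weight (s1, t2) z + nest_weight (s2, t1) z)"
    by (simp_all add: nestings_add_mset sum_mset.distrib)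
qed

text \<open>The third member \<open>(s, t)\<close> shares no endpoint with the two uncrossed ones, except that
  \<open>s = s\<^sub>1\<close> is allowed: this happens when both are poles.\<close>
lemma nest_weight_uncross:
  assumes "s2 < s1" "enat t1 < s2" "t2 < t1" "enat t < s"
    and "s \<noteq> s2" "s \<noteq> enat t1" "s \<noteq> enat t2" "t \<noteq> t1" "t \<noteq> t2" "enat t \<noteq> s1" "enat t \<noteq> s2"
  shows "nest_weight (s1, t1) (s, t) + nest_weight (s2, t2) (s, t)
      \<le> nest_weight (s1, t2) (s, t) + nest_weight (s2, t1) (s, t)"
    and "nest_weight (s1, t1) (s, t) + nest_weight (s2, t2) (s, t)
      < nest_weight (s1, t2) (s, t) + nest_weight (s2, t1) (s, t)
      \<Longrightarrow> s2 < s \<and> s \<le> s1 \<and> t2 < t \<and> t < t1"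
proof -
  obtain b where b: "s2 = enat b"
    using assms(1) by (cases s2) auto
  show "nest_weight (s1, t1) (s, t) + nest_weight (s2, t2) (s, t)
      \<le> nest_weight (s1, t2) (s, t) + nest_weight (s2, t1) (s, t)"
    using assms unfolding b
    by (cases s; cases s1) (auto simp: nest_weight_def nests_def of_bool_def split: if_splits)
  show "s2 < s \<and> s \<le> s1 \<and> t2 < t \<and> t < t1"
    if "nest_weight (s1, t1) (s, t) + nest_weight (s2, t2) (s, t)
      < nest_weight (s1, t2) (s, t) + nest_weight (s2, t1) (s, t)"
    using assms that unfolding b
    by (cases s; cases s1) (auto simp: nest_weight_def nests_def of_bool_def split: if_splits)
qed

text \<open>A jump of the nesting count by at least two comes from a third member \<open>(s, t)\<close> lying
  between the two; uncrossing it first with each of them splits the move.\<close>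
lemma uncross_factor:
  assumes "s2 < s1" "enat t1 < s2" "t2 < t1" "s2 < s" "s \<le> s1" "t2 < t" "t < t1"
  shows "\<exists>Z. uncross (add_mset (s1, t1) (add_mset (s2, t2) (add_mset (s, t) R))) Z \<and>
    uncross\<^sup>+\<^sup>+ Z (add_mset (s1, t2) (add_mset (s2, t1) (add_mset (s, t) R)))"
proof -
  have "enat t < enat t1"
    using assms(7) by simp
  then have "enat t < s2" "enat t1 < s"
    using assms(2,4) by (blast intro: less_trans)+
  show ?thesis
  proof (cases "s = s1")
    case True
    have "uncross (add_mset (s1, t1) (add_mset (s2, t2) (add_mset (s, t) R)))
        (add_mset (s1, t1) (add_mset (s2, t) (add_mset (s1, t2) R)))"
      using uncrossI[of s2 s1 t t2 "add_mset (s1, t1) R"] assms \<open>enat t < s2\<close> True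
      by (simp add: add_mset_commute)
    moreover have "uncross (add_mset (s1, t1) (add_mset (s2, t) (add_mset (s1, t2) R)))
        (add_mset (s1, t2) (add_mset (s2, t1) (add_mset (s, t) R)))"
      using uncrossI[of s2 s1 t1 t "add_mset (s1, t2) R"] assms True
      by (simp add: add_mset_commute)
    ultimately show ?thesis
      by blast
  next
    case False
    then have "s < s1"
      using assms(5) by simp
    have "uncross (add_mset (s1, t1) (add_mset (s2, t2) (add_mset (s, t) R)))
        (add_mset (s1, t) (add_mset (s2, t2) (add_mset (s, t1) R)))"
      using uncrossI[of s s1 t1 t "add_mset (s2, t2) R"] assms \<open>s < s1\<close> \<open>enat t1 < s\<close>
      by (simp add: add_mset_commute)
    moreover have "uncross (add_mset (s1, t) (add_mset (s2, t2) (add_mset (s, t1) R)))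
        (add_mset (s1, t2) (add_mset (s2, t) (add_mset (s, t1) R)))"
      using uncrossI[of s2 s1 t t2 "add_mset (s, t1) R"] assms \<open>enat t < s2\<close>
      by simp
    moreover have "uncross (add_mset (s1, t2) (add_mset (s2, t) (add_mset (s, t1) R)))
        (add_mset (s1, t2) (add_mset (s2, t1) (add_mset (s, t) R)))"
      using uncrossI[of s2 s t1 t "add_mset (s1, t2) R"] assms
      by (simp add: add_mset_commute)
    ultimately show ?thesis
      by (meson tranclp.r_into_trancl tranclp.trancl_into_trancl)
  qed
qed

lemma nestings_uncross:
  assumes "uncross D D'" "row_thin D" "\<forall>x\<in>#D. valid_member x"
  shows "nestings D < nestings D'"
    and "nestings D + 2 \<le> nestings D' \<Longrightarrow> \<exists>Z. uncross D Z \<and> uncross\<^sup>+\<^sup>+ Z D'"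
proof -
  obtain s1 s2 t1 t2 R where o: "s2 < s1" "enat t1 < s2" "t2 < t1"
    and D: "D = add_mset (s1, t1) (add_mset (s2, t2) R)"
    and D': "D' = add_mset (s1, t2) (add_mset (s2, t1) R)"
    using assms(1) unfolding uncross_def by blast
  obtain b where b: "s2 = enat b"
    using o(1) by (cases s2) auto
  have "1 \<le> t2"
    using assms(3) D by (simp add: valid_member_def)
  then have "1 \<le> t1" "1 \<le> b"
    using o b by auto
  let ?before = "\<lambda>z. nest_weight (s1, t1) z + nest_weight (s2, t2) z"
  let ?after = "\<lambda>z. nest_weight (s1, t2) z + nest_weight (s2, t1) z"
  have pointwise: "?before z \<le> ?after z"
    "?before z < ?after z \<Longrightarrow> s2 < fst z \<and> fst z \<le> s1 \<and> t2 < snd z \<and> snd z < t1"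
    if "z \<in># R" for z
  proof -
    obtain s t where z: "z = (s, t)"
      by fastforce
    have "valid_member z"
      using assms(3) D that by simp
    then have "enat t < s" "1 \<le> t"
      by (simp_all add: z valid_member_def)
    have "{#(s1, t1), z#} \<subseteq># D" "{#(s2, t2), z#} \<subseteq># D"
      using that by (simp_all add: D add_mset_commute[of "(s1, t1)"])
    then have apart: "\<not> touches z i" if "1 \<le> i" "touches (s1, t1) i \<or> touches (s2, t2) i" for i
      using row_thin_two_touching[OF assms(2)] that by blast
    have "s \<noteq> s2" "s \<noteq> enat t1" "s \<noteq> enat t2" "t \<noteq> t1" "t \<noteq> t2" "enat t \<noteq> s1" "enat t \<noteq> s2"
      using apart[of b] apart[of t1] apart[of t2] apart[of t] \<open>1 \<le> t2\<close> \<open>1 \<le> t1\<close> \<open>1 \<le> b\<close> \<open>1 \<le> t\<close>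
      by (auto simp: touches_def z b)
    from nest_weight_uncross[OF o \<open>enat t < s\<close> this]
    show "?before z \<le> ?after z"
      "?before z < ?after z \<Longrightarrow> s2 < fst z \<and> fst z \<le> s1 \<and> t2 < snd z \<and> snd z < t1"
      by (simp_all add: z)
  qed
  have sums: "(\<Sum>z\<in>#R. ?before z) \<le> (\<Sum>z\<in>#R. ?after z)"
    using pointwise(1) by (rule sum_mset_mono)
  show "nestings D < nestings D'"
    unfolding D D' using sums nestings_uncross_split[OF o, of R] by linarith
  assume "nestings D + 2 \<le> nestings D'"
  then have "(\<Sum>z\<in>#R. ?before z) < (\<Sum>z\<in>#R. ?after z)"
    unfolding D D' using nestings_uncross_split[OF o, of R] by linarith
  then obtain z where "z \<in># R" "?before z < ?after z"
    using sum_mset_less_imp_ex_less by blast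
  moreover obtain s t R0 where z: "z = (s, t)" "R = add_mset (s, t) R0"
    using multi_member_split[OF \<open>z \<in># R\<close>] by (metis prod.exhaust)
  ultimately have "s2 < s" "s \<le> s1" "t2 < t" "t < t1"
    using pointwise(2)[OF \<open>z \<in># R\<close>] by simp_all
  then show "\<exists>Z. uncross D Z \<and> uncross\<^sup>+\<^sup>+ Z D'"
    unfolding D D' z using uncross_factor[OF o] by blast
qed

section \<open>The poset of arc diagrams of a given LR type\<close>

lemma D_Gamma_valid:
  "D \<in> D_Gamma alpha beta gamma T \<Longrightarrow> x \<in># D \<Longrightarrow> valid_member x"
  by (simp add: D_Gamma_def arc_diagram_def)

lemma D_Gamma_touch_count:
  "D \<in> D_Gamma alpha beta gamma T \<Longrightarrow> 1 \<le> i \<Longrightarrow>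
    size (filter_mset (\<lambda>x. touches x i) D) = conjugate beta i - conjugate gamma i"
  by (simp add: D_Gamma_def arc_diagram_def touches_def)

lemma D_Gamma_sources_eq:
  assumes "D1 \<in> D_Gamma alpha beta gamma T" "D2 \<in> D_Gamma alpha beta gamma T"
  shows "image_mset fst D1 = image_mset fst D2"
proof (rule multiset_eqI)
  fix v :: enat
  have no_source_0: "enat 0 \<notin># image_mset fst D" if "D \<in> D_Gamma alpha beta gamma T" for D
    using D_Gamma_valid[OF that] by (force simp: valid_member_def)
  show "count (image_mset fst D1) v = count (image_mset fst D2) v"
  proof (cases v)
    case (enat i)
    show ?thesis
    proof (cases "i = 0")
      case True
      have "count (image_mset fst D1) (enat 0) = 0" "count (image_mset fst D2) (enat 0) = 0"
        using no_source_0[OF assms(1)] no_source_0[OF assms(2)] by (metis count_inI)+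
      then show ?thesis
        using enat True by simp
    next
      case False
      then have "1 \<le> i"
        by simp
      then show ?thesis
        using assms enat unfolding count_image_mset_eq_size_filter D_Gamma_def has_LR_type_def by simp
    qed
  next
    case infinity
    have poles: "is_pole = (\<lambda>x::member. fst x = \<infinity>)"
      by (auto simp: is_pole_def)
    have "count (image_mset fst D) \<infinity> = size (filter_mset is_pole D)" for D :: "member multiset"
      by (simp add: count_image_mset_eq_size_filter poles)
    then show ?thesis
      using assms infinity by (simp add: D_Gamma_def arc_diagram_def)
  qed
qed

lemma D_Gamma_same_source:
  assumes "D1 \<in> D_Gamma alpha beta gamma T" "D2 \<in> D_Gamma alpha beta gamma T" "(enat s, n) \<in># D2"
  obtains n' where "(enat s, n') \<in># D1"
proof -
  have "enat s \<in># image_mset fst D2"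
    using assms(3) by force
  then have "enat s \<in># image_mset fst D1"
    using D_Gamma_sources_eq[OF assms(1,2)] by simp
  then show thesis
    using that by force
qed

lemma D_Gamma_same_touched:
  assumes "D1 \<in> D_Gamma alpha beta gamma T" "D2 \<in> D_Gamma alpha beta gamma T"
    and "1 \<le> i" "x \<in># D2" "touches x i"
  obtains y where "y \<in># D1" "touches y i"
proof -
  have "x \<in># filter_mset (\<lambda>x. touches x i) D2"
    using assms(4,5) by simp
  then have "size (filter_mset (\<lambda>x. touches x i) D2) \<noteq> 0"
    by (metis empty_iff set_mset_empty size_eq_0_iff_empty)
  then have "size (filter_mset (\<lambda>x. touches x i) D1) \<noteq> 0"
    using D_Gamma_touch_count[OF assms(1,3)] D_Gamma_touch_count[OF assms(2,3)] by simp
  then obtain y where "y \<in># filter_mset (\<lambda>x. touches x i) D1"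
    by (metis multiset_nonemptyE size_eq_0_iff_empty)
  then show thesis
    using that by simp blast
qed

lemma D_Gamma_exchange:
  assumes "R + M \<in> D_Gamma alpha beta gamma T" "\<forall>x\<in>#M'. valid_member x"
    and "size (filter_mset is_arc M') = size (filter_mset is_arc M)"
    and "size (filter_mset is_pole M') = size (filter_mset is_pole M)"
    and "\<And>i. size (filter_mset (\<lambda>x. fst x = enat i \<or> snd x = i) M')
      = size (filter_mset (\<lambda>x. fst x = enat i \<or> snd x = i) M)"
    and "\<And>i. size (filter_mset (\<lambda>x. fst x = enat i) M') = size (filter_mset (\<lambda>x. fst x = enat i) M)"
  shows "R + M' \<in> D_Gamma alpha beta gamma T"
  using assms unfolding D_Gamma_def arc_diagram_def has_LR_type_def by (simp; blast)

lemma uncross_D_Gamma_iff: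
  assumes "uncross D D'"
  shows "D \<in> D_Gamma alpha beta gamma T \<longleftrightarrow> D' \<in> D_Gamma alpha beta gamma T"
proof -
  obtain s1 s2 t1 t2 R where o: "s2 < s1" "enat t1 < s2" "t2 < t1"
    and D: "D = add_mset (s1, t1) (add_mset (s2, t2) R)"
    and D': "D' = add_mset (s1, t2) (add_mset (s2, t1) R)"
    using assms unfolding uncross_def by blast
  let ?M = "{#(s1, t1), (s2, t2)#}" and ?M' = "{#(s1, t2), (s2, t1)#}"
  have split: "D = R + ?M" "D' = R + ?M'"
    by (simp_all add: D D')
  have "enat t2 < enat t1"
    using o(3) by simp
  then have "enat t2 < s2" "enat t2 < s1"
    using o(1,2) by (blast intro: less_trans)+
  then have valid: "(\<forall>x\<in>#?M. valid_member x) \<longleftrightarrow> (\<forall>x\<in>#?M'. valid_member x)"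
    using o by (auto simp: valid_member_def)
  have counts:
    "size (filter_mset is_arc ?M') = size (filter_mset is_arc ?M)"
    "size (filter_mset is_pole ?M') = size (filter_mset is_pole ?M)"
    "size (filter_mset (\<lambda>x. fst x = enat i \<or> snd x = i) ?M')
      = size (filter_mset (\<lambda>x. fst x = enat i \<or> snd x = i) ?M)"
    "size (filter_mset (\<lambda>x. fst x = enat i) ?M') = size (filter_mset (\<lambda>x. fst x = enat i) ?M)"
    for i
  proof -
    have "s1 \<noteq> enat t1" "s1 \<noteq> enat t2" "s2 \<noteq> enat t1" "s2 \<noteq> enat t2" "t1 \<noteq> t2"
      using o \<open>enat t2 < s2\<close> \<open>enat t2 < s1\<close> by auto
    then show "size (filter_mset is_arc ?M') = size (filter_mset is_arc ?M)"
      "size (filter_mset is_pole ?M') = size (filter_mset is_pole ?M)"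
      "size (filter_mset (\<lambda>x. fst x = enat i \<or> snd x = i) ?M')
        = size (filter_mset (\<lambda>x. fst x = enat i \<or> snd x = i) ?M)"
      "size (filter_mset (\<lambda>x. fst x = enat i) ?M') = size (filter_mset (\<lambda>x. fst x = enat i) ?M)"
      by (auto simp: is_arc_def is_pole_def)
  qed
  show ?thesis
  proof
    assume D_in: "D \<in> D_Gamma alpha beta gamma T"
    have "\<forall>x\<in>#?M'. valid_member x"
      using valid D_Gamma_valid[OF D_in] unfolding split by simp
    moreover have "R + ?M \<in> D_Gamma alpha beta gamma T"
      using D_in unfolding split .
    ultimately show "D' \<in> D_Gamma alpha beta gamma T"
      unfolding split using D_Gamma_exchange counts by blast
  next
    assume D'_in: "D' \<in> D_Gamma alpha beta gamma T"
    have "\<forall>x\<in>#?M. valid_member x"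
      using valid D_Gamma_valid[OF D'_in] unfolding split by simp
    moreover have "R + ?M' \<in> D_Gamma alpha beta gamma T"
      using D'_in unfolding split .
    ultimately show "D \<in> D_Gamma alpha beta gamma T"
      unfolding split using D_Gamma_exchange counts[symmetric] by blast
  qed
qed

lemma uncross_rtranclp_D_Gamma:
  assumes "uncross\<^sup>*\<^sup>* D D'" "D \<in> D_Gamma alpha beta gamma T"
  shows "D' \<in> D_Gamma alpha beta gamma T"
  using assms by (induction rule: rtranclp_induct) (use uncross_D_Gamma_iff in blast)+

lemma source_sum_D_Gamma_eq:
  assumes "D1 \<in> D_Gamma alpha beta gamma T" "D2 \<in> D_Gamma alpha beta gamma T"
  shows "source_sum D1 = source_sum D2"
proof -
  have "source_sum D = (\<Sum>e\<in>#image_mset fst D. case e of enat s \<Rightarrow> s | \<infinity> \<Rightarrow> 0)" for D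
    by (simp add: source_sum_def image_mset.compositionality comp_def)
  then show ?thesis
    using D_Gamma_sources_eq[OF assms] by simp
qed

lemma le_arc_iff_uncross:
  assumes "D \<in> D_Gamma alpha beta gamma T" "D' \<in> D_Gamma alpha beta gamma T"
  shows "le_arc D D' \<longleftrightarrow> uncross\<^sup>*\<^sup>* D' D"
proof
  assume "uncross\<^sup>*\<^sup>* D' D"
  then show "le_arc D D'"
    unfolding le_arc_def using mono_rtranclp[of uncross arc_move] uncross_imp_arc_move by blast
next
  assume "le_arc D D'"
  then have "arc_move\<^sup>*\<^sup>* D' D"
    unfolding le_arc_def .
  then show "uncross\<^sup>*\<^sup>* D' D"
    using assms(2)
  proof (induction rule: converse_rtranclp_induct)
    case base
    then show ?case
      by simp
  next
    case (step E P)
    have "source_sum D \<le> source_sum P"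
      using source_sum_arc_moves[OF step.hyps(2)] .
    moreover have "source_sum D = source_sum E"
      using source_sum_D_Gamma_eq[OF assms(1) step.prems] .
    ultimately have "uncross E P"
      using arc_move_uncross_or_source_sum_less[OF step.hyps(1)] by linarith
    moreover have "P \<in> D_Gamma alpha beta gamma T"
      using uncross_D_Gamma_iff[OF \<open>uncross E P\<close>] step.prems by blast
    ultimately show ?case
      using step.IH by (meson converse_rtranclp_into_rtranclp)
  qed
qed

section \<open>Tableaux with at most one box per row\<close>

locale thin_LR_diagrams =
  fixes alpha beta gamma :: "nat list" and T :: "nat \<Rightarrow> nat \<Rightarrow> nat"
  assumes rows_thin: "\<forall>i\<ge>1. conjugate beta i - conjugate gamma i \<le> 1"
begin

abbreviation diagrams :: "member multiset set" where
  "diagrams \<equiv> D_Gamma alpha beta gamma T"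

lemma diagram_row_thin: "D \<in> diagrams \<Longrightarrow> row_thin D"
  unfolding row_thin_def using D_Gamma_touch_count rows_thin by simp

lemma nestings_uncross_less: "D \<in> diagrams \<Longrightarrow> uncross D D' \<Longrightarrow> nestings D < nestings D'"
  using nestings_uncross(1) diagram_row_thin D_Gamma_valid by blast

lemma nestings_less_if_uncross_tranclp:
  assumes "uncross\<^sup>+\<^sup>+ D D'" "D \<in> diagrams"
  shows "nestings D < nestings D'"
  using assms
proof (induction rule: tranclp_induct)
  case (base D')
  then show ?case
    using nestings_uncross_less by blast
next
  case (step E F)
  have "E \<in> diagrams"
    using uncross_rtranclp_D_Gamma[OF tranclp_into_rtranclp[OF step.hyps(1)] step.prems] .
  then show ?case
    using step nestings_uncross_less[of E F] by simp
qed

lemma nestings_less_if_le_arc: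
  assumes "D \<in> diagrams" "D' \<in> diagrams" "le_arc D D'" "D \<noteq> D'"
  shows "nestings D' < nestings D"
proof -
  have "uncross\<^sup>*\<^sup>* D' D"
    using le_arc_iff_uncross[OF assms(1,2)] assms(3) by blast
  then have "uncross\<^sup>+\<^sup>+ D' D"
    using rtranclpD assms(4) by metis
  then show ?thesis
    using nestings_less_if_uncross_tranclp assms(2) by blast
qed

lemma ranked_preorder_diagrams: "ranked_preorder diagrams (\<lambda>D D'. le_arc D' D) nestings"
proof
  show "le_arc D D" for D
    by (simp add: le_arc_def)
  show "le_arc E D" if "le_arc D' D" "le_arc E D'" for D D' E
    using that unfolding le_arc_def by (rule rtranclp_trans)
  show "nestings D < nestings D'" if "D \<in> diagrams" "D' \<in> diagrams" "le_arc D' D" "D \<noteq> D'" for D D'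
    using nestings_less_if_le_arc that by blast
qed

lemma le_arc_interpolate:
  assumes "D \<in> diagrams" "D' \<in> diagrams" "le_arc D D'" "nestings D' + 2 \<le> nestings D"
  shows "\<exists>Z\<in>diagrams. le_arc D Z \<and> le_arc Z D' \<and> nestings D' < nestings Z \<and> nestings Z < nestings D"
proof -
  have "D \<noteq> D'"
    using assms(4) by auto
  moreover have "uncross\<^sup>*\<^sup>* D' D"
    using le_arc_iff_uncross[OF assms(1,2)] assms(3) by blast
  ultimately have "uncross\<^sup>+\<^sup>+ D' D"
    using rtranclpD by metis
  then obtain P where P: "uncross D' P" "uncross\<^sup>*\<^sup>* P D"
    using tranclpD by metis
  have "\<exists>Z. uncross D' Z \<and> uncross\<^sup>+\<^sup>+ Z D"
  proof (cases "P = D")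
    case True
    then show ?thesis
      using nestings_uncross(2) P(1) assms diagram_row_thin D_Gamma_valid by blast
  next
    case False
    then have "uncross\<^sup>+\<^sup>+ P D"
      using rtranclpD[OF P(2)] by blast
    then show ?thesis
      using P(1) by blast
  qed
  then obtain Z where Z: "uncross D' Z" "uncross\<^sup>+\<^sup>+ Z D"
    by blast
  have "Z \<in> diagrams"
    using uncross_D_Gamma_iff[OF Z(1)] assms(2) by blast
  moreover have "le_arc D Z"
    using le_arc_iff_uncross[OF assms(1) \<open>Z \<in> diagrams\<close>] tranclp_into_rtranclp[OF Z(2)] by blast
  moreover have "le_arc Z D'"
    using le_arc_iff_uncross[OF \<open>Z \<in> diagrams\<close> assms(2)] Z(1) by blast
  moreover have "nestings D' < nestings Z" "nestings Z < nestings D"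
    using nestings_uncross_less[OF assms(2) Z(1)] nestings_less_if_uncross_tranclp[OF Z(2)]
      \<open>Z \<in> diagrams\<close> by simp_all
  ultimately show ?thesis
    by blast
qed

text \<open>Comparing two diagrams arc by arc in order of increasing source: the first disagreement
  at source \<open>s\<close> forces a member ending at \<open>n\<^sub>2\<close> above \<open>s\<close> in \<open>D\<^sub>1\<close>, because row \<open>n\<^sub>2\<close>
  is touched in both diagrams.\<close>
lemma higher_member_at_target:
  assumes D1: "D1 \<in> diagrams" and D2: "D2 \<in> diagrams"
    and agree: "\<forall>s'<s. \<forall>n. (enat s', n) \<in># D1 \<longleftrightarrow> (enat s', n) \<in># D2"
    and m1: "(enat s, n1) \<in># D1" and m2: "(enat s, n2) \<in># D2" and "n1 \<noteq> n2"
  shows "\<exists>e>enat s. (e, n2) \<in># D1"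
proof -
  have "1 \<le> n2" "n2 < s" "1 \<le> s"
    using D_Gamma_valid[OF D2 m2] by (auto simp: valid_member_def)
  obtain x where x: "x \<in># D1" "touches x n2"
    using D_Gamma_same_touched[OF D1 D2 \<open>1 \<le> n2\<close> m2] by (auto simp: touches_def)
  have "fst x \<noteq> enat n2"
  proof
    assume "fst x = enat n2"
    then obtain n' where n': "(enat n2, n') \<in># D2"
      using D_Gamma_same_source[OF D2 D1, of n2 "snd x"] x(1) by (metis prod.collapse)
    have "(enat n2, n') = (enat s, n2)"
      by (rule row_thin_touching_eq[OF diagram_row_thin[OF D2] n' m2 \<open>1 \<le> n2\<close>])
        (simp_all add: touches_def)
    with \<open>n2 < s\<close> show False
      by simp
  qed
  then obtain e where xe: "x = (e, n2)"
    using x(2) by (metis prod.collapse touches_def)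
  have "enat s < e"
  proof (rule ccontr)
    assume "\<not> enat s < e"
    then obtain s' where e: "e = enat s'" "s' \<le> s"
      by (cases e) auto
    show False
    proof (cases "s' = s")
      case True
      have "(enat s, n2) = (enat s, n1)"
        using row_thin_touching_eq[OF diagram_row_thin[OF D1] _ m1 \<open>1 \<le> s\<close>] x(1) xe e True
        by (simp add: touches_def)
      with \<open>n1 \<noteq> n2\<close> show False
        by simp
    next
      case False
      then have "(enat s', n2) \<in># D2"
        using agree x(1) xe e by auto
      then have "(enat s', n2) = (enat s, n2)"
        using row_thin_touching_eq[OF diagram_row_thin[OF D2] _ m2 \<open>1 \<le> n2\<close>] by (simp add: touches_def)
      with False show False
        by simp
    qed
  qed
  then show ?thesis
    using x(1) xe by blast
qed

lemma diagrams_eq_if_arcs_eq: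
  assumes D1: "D1 \<in> diagrams" and D2: "D2 \<in> diagrams"
    and arcs: "\<And>s n. (enat s, n) \<in># D1 \<longleftrightarrow> (enat s, n) \<in># D2"
  shows "D1 = D2"
proof -
  have pole: "(\<infinity>, t) \<in># D'"
    if D: "D \<in> diagrams" "D' \<in> diagrams" "(\<infinity>, t) \<in># D"
      and same: "\<forall>s n. (enat s, n) \<in># D' \<longrightarrow> (enat s, n) \<in># D" for D D' t
  proof -
    have "1 \<le> t"
      using D_Gamma_valid[OF D(1,3)] by (simp add: valid_member_def)
    obtain y where y: "y \<in># D'" "touches y t"
      using D_Gamma_same_touched[OF D(2,1) \<open>1 \<le> t\<close> D(3)] by (auto simp: touches_def)
    obtain e m where ye: "y = (e, m)"
      by fastforce
    show ?thesis
    proof (cases e)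
      case (enat s)
      then have "(e, m) \<in># D"
        using same y(1) ye by simp
      then have "(e, m) = (\<infinity>, t)"
        using row_thin_touching_eq[OF diagram_row_thin[OF D(1)] _ D(3) \<open>1 \<le> t\<close>] y(2) ye
        by (simp add: touches_def)
      with enat show ?thesis
        by simp
    next
      case infinity
      then show ?thesis
        using y ye by (simp add: touches_def)
    qed
  qed
  have same_members: "x \<in># D1 \<longleftrightarrow> x \<in># D2" for x
  proof (cases x)
    case (Pair e m)
    then show ?thesis
      using arcs pole[OF D1 D2] pole[OF D2 D1] by (cases e) auto
  qed
  show ?thesis
  proof (rule multiset_eqI)
    fix x
    show "count D1 x = count D2 x"
    proof (cases "x \<in># D1")
      case True
      then have "valid_member x" "x \<in># D2"
        using D_Gamma_valid[OF D1] same_members by blast+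
      then have "count D1 x \<le> 1" "count D2 x \<le> 1"
        using row_thin_count_le_1 diagram_row_thin D1 D2 by blast+
      moreover have "0 < count D1 x" "0 < count D2 x"
        using True \<open>x \<in># D2\<close> by simp_all
      ultimately show ?thesis
        by linarith
    next
      case False
      then have "x \<notin># D2"
        using same_members by blast
      with False show ?thesis
        by (simp add: not_in_iff)
    qed
  qed
qed

lemma diagrams_eq_by_sources:
  assumes D1: "D1 \<in> diagrams" and D2: "D2 \<in> diagrams"
    and first_disagreement: "\<And>s n1 n2. \<forall>s'<s. \<forall>n. (enat s', n) \<in># D1 \<longleftrightarrow> (enat s', n) \<in># D2 \<Longrightarrow>
      (enat s, n1) \<in># D1 \<Longrightarrow> (enat s, n2) \<in># D2 \<Longrightarrow> n1 = n2"
  shows "D1 = D2"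
proof (rule diagrams_eq_if_arcs_eq[OF D1 D2])
  fix s n
  show "(enat s, n) \<in># D1 \<longleftrightarrow> (enat s, n) \<in># D2"
  proof (induction s arbitrary: n rule: less_induct)
    case (less s)
    then have agree: "\<forall>s'<s. \<forall>n. (enat s', n) \<in># D1 \<longleftrightarrow> (enat s', n) \<in># D2"
      by blast
    show ?case
    proof
      assume m1: "(enat s, n) \<in># D1"
      obtain n2 where "(enat s, n2) \<in># D2"
        by (rule D_Gamma_same_source[OF D2 D1 m1])
      with first_disagreement[OF agree m1] show "(enat s, n) \<in># D2"
        by simp
    next
      assume m2: "(enat s, n) \<in># D2"
      obtain n1 where "(enat s, n1) \<in># D1"
        by (rule D_Gamma_same_source[OF D1 D2 m2])
      with first_disagreement[OF agree _ m2] show "(enat s, n) \<in># D1"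
        by simp
    qed
  qed
qed

lemma top_diagrams_eq:
  assumes D1: "D1 \<in> diagrams" and D2: "D2 \<in> diagrams"
    and top: "\<nexists>D. uncross D D1" "\<nexists>D. uncross D D2"
  shows "D1 = D2"
proof (rule diagrams_eq_by_sources[OF D1 D2])
  fix s n1 n2
  assume agree: "\<forall>s'<s. \<forall>n. (enat s', n) \<in># D1 \<longleftrightarrow> (enat s', n) \<in># D2"
    and m1: "(enat s, n1) \<in># D1" and m2: "(enat s, n2) \<in># D2"
  have "n1 < s" "n2 < s"
    using D_Gamma_valid[OF D1 m1] D_Gamma_valid[OF D2 m2] by (simp_all add: valid_member_def)
  show "n1 = n2"
  proof (rule ccontr)
    assume "n1 \<noteq> n2"
    then consider "n2 < n1" | "n1 < n2"
      by linarith
    then show False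
    proof cases
      case 1
      obtain e where "enat s < e" "(e, n2) \<in># D1"
        using higher_member_at_target[OF D1 D2 agree m1 m2 \<open>n1 \<noteq> n2\<close>] by blast
      then have "\<exists>D. uncross D D1"
        using uncross_into_members[of e n2 D1 "enat s" n1] m1 \<open>n1 < s\<close> 1 by simp
      with top(1) show False ..
    next
      case 2
      have agree': "\<forall>s'<s. \<forall>n. (enat s', n) \<in># D2 \<longleftrightarrow> (enat s', n) \<in># D1"
        using agree by blast
      obtain e where "enat s < e" "(e, n1) \<in># D2"
        using higher_member_at_target[OF D2 D1 agree' m2 m1] \<open>n1 \<noteq> n2\<close> by auto
      then have "\<exists>D. uncross D D2"
        using uncross_into_members[of e n1 D2 "enat s" n2] m2 \<open>n2 < s\<close> 2 by simp
      with top(2) show False ..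
    qed
  qed
qed

lemma bottom_diagrams_eq:
  assumes D1: "D1 \<in> diagrams" and D2: "D2 \<in> diagrams"
    and bottom: "\<nexists>D. uncross D1 D" "\<nexists>D. uncross D2 D"
  shows "D1 = D2"
proof (rule diagrams_eq_by_sources[OF D1 D2])
  fix s n1 n2
  assume agree: "\<forall>s'<s. \<forall>n. (enat s', n) \<in># D1 \<longleftrightarrow> (enat s', n) \<in># D2"
    and m1: "(enat s, n1) \<in># D1" and m2: "(enat s, n2) \<in># D2"
  have "n1 < s" "n2 < s"
    using D_Gamma_valid[OF D1 m1] D_Gamma_valid[OF D2 m2] by (simp_all add: valid_member_def)
  show "n1 = n2"
  proof (rule ccontr)
    assume "n1 \<noteq> n2"
    then consider "n1 < n2" | "n2 < n1"
      by linarith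
    then show False
    proof cases
      case 1
      obtain e where "enat s < e" "(e, n2) \<in># D1"
        using higher_member_at_target[OF D1 D2 agree m1 m2 \<open>n1 \<noteq> n2\<close>] by blast
      then have "\<exists>D. uncross D1 D"
        using uncross_of_members[of e n2 D1 "enat s" n1] m1 \<open>n2 < s\<close> 1 by simp
      with bottom(1) show False ..
    next
      case 2
      have agree': "\<forall>s'<s. \<forall>n. (enat s', n) \<in># D2 \<longleftrightarrow> (enat s', n) \<in># D1"
        using agree by blast
      obtain e where "enat s < e" "(e, n1) \<in># D2"
        using higher_member_at_target[OF D2 D1 agree' m2 m1] \<open>n1 \<noteq> n2\<close> by auto
      then have "\<exists>D. uncross D2 D"
        using uncross_of_members[of e n1 D2 "enat s" n2] m2 \<open>n1 < s\<close> 2 by simp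
      with bottom(2) show False ..
    qed
  qed
qed

lemma ex_greatest_diagram:
  assumes "D0 \<in> diagrams"
  shows "\<exists>Dmax\<in>diagrams. \<forall>D\<in>diagrams. le_arc D Dmax"
proof -
  have maximal_above: "\<exists>M\<in>diagrams. le_arc D M \<and> (\<nexists>E. uncross E M)" if D: "D \<in> diagrams" for D
  proof -
    obtain M where M: "M \<in> diagrams" "le_arc D M" "\<forall>E\<in>diagrams. le_arc M E \<longrightarrow> E = M"
      using ranked_preorder.ex_minimal_below[OF ranked_preorder_diagrams D] by blast
    have "\<nexists>E. uncross E M"
    proof
      assume "\<exists>E. uncross E M"
      then obtain E where E: "uncross E M" ..
      then have "E \<in> diagrams"
        using uncross_D_Gamma_iff M(1) by blast
      moreover have "le_arc M E"
        using le_arc_iff_uncross[OF M(1) \<open>E \<in> diagrams\<close>] E by blast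
      ultimately have "E = M"
        using M(3) by blast
      with E \<open>E \<in> diagrams\<close> show False
        using nestings_uncross_less by blast
    qed
    with M show ?thesis
      by blast
  qed
  obtain Dmax where Dmax: "Dmax \<in> diagrams" "\<nexists>E. uncross E Dmax"
    using maximal_above[OF assms] by blast
  have "le_arc D Dmax" if "D \<in> diagrams" for D
    using maximal_above[OF that] top_diagrams_eq[OF _ Dmax(1) _ Dmax(2)] by blast
  with Dmax(1) show ?thesis
    by blast
qed

lemma ex_least_diagram:
  assumes "D0 \<in> diagrams"
  shows "\<exists>Dmin\<in>diagrams. \<forall>D\<in>diagrams. le_arc Dmin D"
proof -
  have bounded: "\<forall>D\<in>diagrams. nestings D \<le> size D0 * size D0"
  proof
    fix D assume "D \<in> diagrams"
    then have "size D = size D0"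
      using D_Gamma_sources_eq[OF _ assms] by (metis size_image_mset)
    then show "nestings D \<le> size D0 * size D0"
      using nestings_le_square[of D] by simp
  qed
  have minimal_below: "\<exists>M\<in>diagrams. le_arc M D \<and> (\<nexists>E. uncross M E)" if D: "D \<in> diagrams" for D
  proof -
    obtain M where M: "M \<in> diagrams" "le_arc M D" "\<forall>E\<in>diagrams. le_arc E M \<longrightarrow> E = M"
      using ranked_preorder.ex_maximal_above[OF ranked_preorder_diagrams D bounded] by blast
    have "\<nexists>E. uncross M E"
    proof
      assume "\<exists>E. uncross M E"
      then obtain E where E: "uncross M E" ..
      then have "E \<in> diagrams"
        using uncross_D_Gamma_iff M(1) by blast
      moreover have "le_arc E M"
        using le_arc_iff_uncross[OF \<open>E \<in> diagrams\<close> M(1)] E by blast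
      ultimately have "E = M"
        using M(3) by blast
      with E M(1) show False
        using nestings_uncross_less by blast
    qed
    with M show ?thesis
      by blast
  qed
  obtain Dmin where Dmin: "Dmin \<in> diagrams" "\<nexists>E. uncross Dmin E"
    using minimal_below[OF assms] by blast
  have "le_arc Dmin D" if "D \<in> diagrams" for D
    using minimal_below[OF that] bottom_diagrams_eq[OF _ Dmin(1) _ Dmin(2)] by blast
  with Dmin(1) show ?thesis
    by blast
qed

lemma card_saturated_chain_diagrams:
  assumes "saturated_chain diagrams le_arc C"
    and "Dmax \<in> diagrams" "\<forall>D\<in>diagrams. le_arc D Dmax"
    and "Dmin \<in> diagrams" "\<forall>D\<in>diagrams. le_arc Dmin D"
  shows "card C = nestings Dmin + 1 - nestings Dmax"
  using ranked_preorder.card_saturated_chain[OF ranked_preorder_diagrams, of Dmax Dmin C]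
    le_arc_interpolate assms saturated_chain_converse[of diagrams le_arc C]
  by blast

end

theorem mainTheorem3:
  fixes alpha beta gamma :: "nat list" and T :: "nat \<Rightarrow> nat \<Rightarrow> nat"
  assumes "is_partition alpha" "is_partition beta" "is_partition gamma"
    and "\<forall>x\<in>set alpha. x \<le> 2"
    and "LR_tableau alpha beta gamma T"
    and "\<forall>i\<ge>1. conjugate beta i - conjugate gamma i \<le> 1"
    and "saturated_chain (D_Gamma alpha beta gamma T) le_arc C1"
    and "saturated_chain (D_Gamma alpha beta gamma T) le_arc C2"
  shows "card C1 = card C2"
proof (cases "D_Gamma alpha beta gamma T = {}")
  case True
  then show ?thesis
    using assms(7,8) by (simp add: saturated_chain_def is_chain_in_def)
next
  case False
  interpret thin_LR_diagrams alpha beta gamma T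
    using assms(6) by unfold_locales
  obtain Dmax Dmin where "Dmax \<in> diagrams" "\<forall>D\<in>diagrams. le_arc D Dmax"
    and "Dmin \<in> diagrams" "\<forall>D\<in>diagrams. le_arc Dmin D"
    using ex_greatest_diagram ex_least_diagram False by blast
  then show ?thesis
    using card_saturated_chain_diagrams[OF assms(7)] card_saturated_chain_diagrams[OF assms(8)]
    by simp
qed

end
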